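(* Let $d$ be an integer with $1\le d\le q$. Then $$e_1(d,m)>e_2(d,m)>\dots>e_{\binom{m+d}{d}}(d,m)=0.$$
   Context: $q$ is a prime power, $\mathbb{F}_q$ the finite field with $q$ elements, $m$ a positive integer. $e_r(d,m)$ is the maximum, over all families of $r$ linearly independent homogeneous polynomials of degree $d$ in $\mathbb{F}_q[x_0,\dots,x_m]$, of the number of points of $\mathbb{P}^m(\mathbb{F}_q)$ at which all of them vanish. *)

theory Defs
  imports Complex_Main "HOL-Library.Function_Algebras"
begin

definition monoms :: "nat \<Rightarrow> nat \<Rightarrow> (nat \<Rightarrow> nat) set" where
  "monoms d m = {\<alpha>. (\<forall>i>m. \<alpha> i = 0) \<and> (\<Sum>i\<le>m. \<alpha> i) = d}"

text \<open>A homogeneous polynomial of degree d in F[x_0,...,x_m] is represented by its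
  coefficient function on monomials, supported on monomials of total degree d.
  (The zero polynomial is included; it is never in a linearly independent family.)\<close>
definition hom_polys :: "nat \<Rightarrow> nat \<Rightarrow> ((nat \<Rightarrow> nat) \<Rightarrow> 'a::field) set" where
  "hom_polys d m = {f. \<forall>\<alpha>. \<alpha> \<notin> monoms d m \<longrightarrow> f \<alpha> = 0}"

definition heval :: "nat \<Rightarrow> nat \<Rightarrow> ((nat \<Rightarrow> nat) \<Rightarrow> 'a::field) \<Rightarrow> (nat \<Rightarrow> 'a) \<Rightarrow> 'a" where
  "heval d m f x = (\<Sum>\<alpha>\<in>monoms d m. f \<alpha> * (\<Prod>i\<le>m. x i ^ \<alpha> i))"

text \<open>Points of P^m(F): classes of nonzero vectors (x_0,...,x_m) modulo nonzero scalars.\<close>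
definition proj_points :: "nat \<Rightarrow> (nat \<Rightarrow> 'a::field) set set" where
  "proj_points m = {{(\<lambda>i. c * x i) | c. c \<noteq> 0} | x.
      (\<forall>i>m. x i = 0) \<and> (\<exists>i\<le>m. x i \<noteq> 0)}"

definition num_zeros :: "nat \<Rightarrow> nat \<Rightarrow> ((nat \<Rightarrow> nat) \<Rightarrow> 'a::field) set \<Rightarrow> nat" where
  "num_zeros d m F = card {P \<in> proj_points m. \<forall>f\<in>F. \<forall>x\<in>P. heval d m f x = 0}"

definition e_r :: "'a::{finite,field} itself \<Rightarrow> nat \<Rightarrow> nat \<Rightarrow> nat \<Rightarrow> nat" where
  "e_r _ r d m = Max {num_zeros d m (F :: ((nat \<Rightarrow> nat) \<Rightarrow> 'a) set) | F.
      F \<subseteq> hom_polys d m \<and> card F = r \<and>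
      module.independent (\<lambda>c f. (\<lambda>\<alpha>. c * f \<alpha>)) F}"

end

theory Submission
  imports Defs "HOL-Computational_Algebra.Polynomial"
begin

(* Let N = binom(m + d, d), the dimension of the space of forms of degree d.
   A nonzero form of degree d <= q does not vanish on all of F_q^(m+1): replacing every
   x_j^q by x_j does not change its values and turns it into a reduced polynomial (all
   exponents < q) with the same nonzero coefficients, and a reduced polynomial vanishing on
   F_q^(m+1) is zero. Now let F be an independent family of r + 1 forms with e_(r+1) common
   zeros, f0 in F and f0(x) /= 0. The r forms f - (f(x)/f0(x)) f0 with f in F - {f0} are
   still independent, vanish at every common zero of F, and also at the point [x], which is
   not a common zero of F; hence e_r > e_(r+1). Finally, N independent forms span all forms,
   in particular every x_k^d, so they have no common zero and e_N = 0. *)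

section \<open>Linear independence\<close>

context vector_space
begin

lemma independent_if_spans_independent:
  assumes "independent S" "S \<subseteq> span T" "finite T" "card T \<le> card S"
  shows "independent T"
proof
  assume "dependent T"
  then obtain a where a: "a \<in> T" "a \<in> span (T - {a})"
    unfolding dependent_def by blast
  have "T \<subseteq> span (T - {a})"
  proof
    fix b assume "b \<in> T"
    then show "b \<in> span (T - {a})"
      using a(2) by (cases "b = a") (auto intro: span_base)
  qed
  then have "span T \<subseteq> span (T - {a})"
    by (rule span_minimal[OF _ subspace_span])
  then have "card S \<le> card (T - {a})"
    using independent_span_bound[OF _ assms(1)] assms(2,3) by blast
  also have "\<dots> < card T"
    using assms(3) a(1) by (rule card_Diff1_less)
  finally show False
    using assms(4) by simp
qed

lemma span_subset_if_independent_card_ge: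
  assumes "independent S" "S \<subseteq> span T" "finite T" "card T \<le> card S"
  shows "span T \<subseteq> span S"
proof
  fix b assume b: "b \<in> span T"
  show "b \<in> span S"
  proof (rule ccontr)
    assume nb: "b \<notin> span S"
    then have "b \<notin> S"
      using span_base by blast
    have "independent (insert b S)"
      using nb assms(1) by (rule independent_insertI)
    moreover have "insert b S \<subseteq> span T"
      using assms(2) b by blast
    ultimately have "finite S" "card (insert b S) \<le> card T"
      using independent_span_bound[OF assms(3)] by (blast dest: finite_insert[THEN iffD1])+
    with \<open>b \<notin> S\<close> assms(4) show False by simp
  qed
qed

lemma independent_subtract_multiples:
  fixes t :: "'b \<Rightarrow> 'a"
  assumes "independent S" "finite S" "v \<in> S"
  defines "W \<equiv> (\<lambda>w. w - t w *s v) ` (S - {v})"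
  shows "independent W" and "card W = card S - 1"
proof -
  have "w \<in> span (insert v W)" if "w \<in> S" for w
  proof (cases "w = v")
    case False
    then have "w - t w *s v \<in> span (insert v W)"
      using that by (intro span_base) (auto simp: W_def)
    then show ?thesis
      using span_add[OF _ span_scale[OF span_base[of v "insert v W"]], of "w - t w *s v" "t w"]
      by simp
  qed (simp add: span_base)
  then have spans: "S \<subseteq> span (insert v W)" by blast
  have finW: "finite W"
    using assms(2) by (simp add: W_def)
  have "card W \<le> card (S - {v})"
    unfolding W_def by (rule card_image_le) (use assms(2) in simp)
  also have "\<dots> = card S - 1"
    using assms(2,3) by simp
  finally have le: "card W \<le> card S - 1" .
  have ins: "card (insert v W) \<le> Suc (card W)"
    by (simp add: card_insert_if finW)
  have "card S \<le> card (insert v W)"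
    using independent_span_bound[OF _ assms(1) spans] finW by simp
  with ins show card: "card W = card S - 1"
    using le by linarith
  have "0 < card S"
    using assms(2,3) card_gt_0_iff by blast
  then have "card (insert v W) \<le> card S"
    using ins card by linarith
  then have "independent (insert v W)"
    using independent_if_spans_independent[OF assms(1) spans] finW by simp
  then show "independent W"
    using independent_mono by blast
qed

end

section \<open>Monomials and evaluation\<close>

type_synonym 'a mpoly = "(nat \<Rightarrow> nat) \<Rightarrow> 'a"

(* The scaling of e_r_def, so polys.independent is the independence in e_r. *)
interpretation polys: vector_space "\<lambda>(c::'a::field) (f::'a mpoly) \<alpha>. c * f \<alpha>"
  by unfold_locales (auto simp: fun_eq_iff algebra_simps)

lemma monoms_bij_lists:
  "bij_betw (\<lambda>\<alpha>. map \<alpha> [0..<Suc m]) (monoms d m) {l. length l = Suc m \<and> sum_list l = d}"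
proof -
  have sum_map: "sum_list (map \<alpha> [0..<Suc m]) = (\<Sum>i\<le>m. \<alpha> i)" for \<alpha> :: "nat \<Rightarrow> nat"
    by (simp only: sum_set_upt_conv_sum_list_nat[symmetric] set_upt atLeast0LessThan
        lessThan_Suc_atMost)
  show ?thesis
  proof (rule bij_betwI'[where Y = "{l. length l = Suc m \<and> sum_list l = d}"])
    fix \<alpha> \<beta> assume \<alpha>: "\<alpha> \<in> monoms d m" and \<beta>: "\<beta> \<in> monoms d m"
    have "\<alpha> = \<beta>" if "\<forall>i\<le>m. \<alpha> i = \<beta> i"
    proof
      show "\<alpha> i = \<beta> i" for i
        by (cases "i \<le> m") (use that \<alpha> \<beta> in \<open>auto simp: monoms_def\<close>)
    qed
    moreover have "(map \<alpha> [0..<Suc m] = map \<beta> [0..<Suc m]) = (\<forall>i\<le>m. \<alpha> i = \<beta> i)"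
      by (simp only: map_eq_conv set_upt atLeast0LessThan lessThan_Suc_atMost atMost_iff Ball_def)
    ultimately show "(map \<alpha> [0..<Suc m] = map \<beta> [0..<Suc m]) = (\<alpha> = \<beta>)"
      by auto
  next
    fix \<alpha> assume "\<alpha> \<in> monoms d m"
    then show "map \<alpha> [0..<Suc m] \<in> {l. length l = Suc m \<and> sum_list l = d}"
      by (simp add: monoms_def sum_map del: upt_Suc)
  next
    fix l :: "nat list" assume l: "l \<in> {l. length l = Suc m \<and> sum_list l = d}"
    define \<alpha> where "\<alpha> = (\<lambda>i. if i \<le> m then l ! i else 0)"
    have "map \<alpha> [0..<Suc m] = l"
      using l by (intro nth_equalityI) (auto simp: \<alpha>_def simp del: upt_Suc)
    moreover from this have "\<alpha> \<in> monoms d m"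
      using l sum_map[of \<alpha>] by (auto simp: monoms_def \<alpha>_def)
    ultimately show "\<exists>\<alpha>\<in>monoms d m. l = map \<alpha> [0..<Suc m]" by auto
  qed
qed

lemma finite_monoms: "finite (monoms d m)"
proof -
  have "{l. length l = Suc m \<and> sum_list l = d} \<subseteq> {l. set l \<subseteq> {..d} \<and> length l = Suc m}"
    by (auto simp: member_le_sum_list)
  then have "finite {l. length l = Suc m \<and> sum_list l = d}"
    by (rule finite_subset) (simp add: finite_lists_length_eq)
  then show ?thesis
    using monoms_bij_lists bij_betw_finite by blast
qed

lemma card_monoms: "card (monoms d m) = (m + d) choose d"
  using bij_betw_same_card[OF monoms_bij_lists] card_length_sum_list[of "Suc m" d]
  by (simp add: add.commute)

lemma monoms_le: "\<alpha> \<in> monoms d m \<Longrightarrow> \<alpha> i \<le> d"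
  by (cases "i \<le> m") (auto simp: monoms_def intro!: member_le_sum[of i "{..m}", simplified])

lemma monoms_pure_power:
  assumes "\<alpha> \<in> monoms d m" "\<alpha> j = d" "1 \<le> d"
  shows "\<alpha> = (\<lambda>i. if i = j then d else 0)"
proof -
  have jm: "j \<le> m"
    by (rule ccontr) (use assms in \<open>auto simp: monoms_def\<close>)
  have "\<alpha> i = 0" if "i \<noteq> j" "i \<le> m" for i
  proof -
    have "(\<Sum>k\<in>{i,j}. \<alpha> k) \<le> (\<Sum>k\<le>m. \<alpha> k)"
      by (rule sum_mono2) (use that jm in auto)
    then show ?thesis using assms that by (simp add: monoms_def)
  qed
  moreover have "\<alpha> i = 0" if "i > m" for i
    using assms(1) that by (simp add: monoms_def)
  ultimately show ?thesis
    using assms(2) by (metis not_le)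
qed

lemma heval_add: "heval d m (f + g) x = heval d m f x + heval d m g x"
  by (simp add: heval_def distrib_right sum.distrib)

lemma heval_diff: "heval d m (f - g) x = heval d m f x - heval d m g x"
  by (simp add: heval_def left_diff_distrib sum_subtractf)

lemma heval_scale: "heval d m (\<lambda>\<alpha>. c * f \<alpha>) x = c * heval d m f x"
  by (simp add: heval_def algebra_simps sum_distrib_left)

lemma heval_zero: "heval d m 0 x = 0"
  by (simp add: heval_def)

lemma heval_span_eq_0:
  assumes "g \<in> polys.span S" "\<forall>f\<in>S. heval d m f x = 0"
  shows "heval d m g x = 0"
proof -
  have "polys.span S \<subseteq> {g. heval d m g x = 0}"
    using assms(2) by (intro polys.span_minimal)
      (auto simp: polys.subspace_def heval_add heval_zero heval_scale)
  then show ?thesis using assms(1) by auto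
qed

lemma heval_homogeneous:
  assumes "f \<in> hom_polys d m"
  shows "heval d m f (\<lambda>i. c * x i) = c ^ d * heval d m f x"
proof -
  have "(\<Prod>i\<le>m. (c * x i) ^ \<alpha> i) = c ^ d * (\<Prod>i\<le>m. x i ^ \<alpha> i)" if "\<alpha> \<in> monoms d m" for \<alpha>
  proof -
    have "(\<Prod>i\<le>m. (c * x i) ^ \<alpha> i) = (\<Prod>i\<le>m. c ^ \<alpha> i) * (\<Prod>i\<le>m. x i ^ \<alpha> i)"
      by (simp add: power_mult_distrib prod.distrib)
    also have "(\<Prod>i\<le>m. c ^ \<alpha> i) = c ^ d"
      using that by (simp add: power_sum[symmetric] monoms_def)
    finally show ?thesis .
  qed
  then show ?thesis
    by (simp add: heval_def sum_distrib_left algebra_simps)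
qed

lemma heval_restrict: "heval d m f x = heval d m f (\<lambda>i. if i \<le> m then x i else 0)"
  unfolding heval_def by (intro sum.cong refl prod.cong) auto

lemma heval_origin:
  assumes "1 \<le> d"
  shows "heval d m f (\<lambda>_. 0) = 0"
proof -
  have "\<exists>i\<le>m. \<alpha> i \<noteq> 0" if "\<alpha> \<in> monoms d m" for \<alpha>
  proof (rule ccontr)
    assume "\<not> ?thesis"
    then have "(\<Sum>i\<le>m. \<alpha> i) = 0" by simp
    with that assms show False by (simp add: monoms_def)
  qed
  then show ?thesis
    unfolding heval_def by (force intro: sum.neutral)
qed

lemma subspace_hom_polys: "polys.subspace (hom_polys d m)"
  by (auto simp: polys.subspace_def hom_polys_def)

section \<open>Polynomials vanishing on a finite field\<close>

lemma card_finite_field_ge_2: "2 \<le> card (UNIV :: 'a::{finite,field} set)"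
  using card_mono[of "UNIV :: 'a set" "{0, 1}"] by simp

lemma finite_field_power_card: "(x::'a::{finite,field}) ^ card (UNIV :: 'a set) = x"
proof (cases "x = 0")
  case True
  then show ?thesis using card_finite_field_ge_2[where 'a='a] by simp
next
  case False
  let ?U = "UNIV - {0::'a}"
  have "(\<Prod>y\<in>?U. x * y) = (\<Prod>y\<in>?U. y)"
    by (rule prod.reindex_bij_witness[where i="\<lambda>y. y / x" and j="\<lambda>y. x * y"]) (use False in auto)
  moreover have "(\<Prod>y\<in>?U. x * y) = x ^ card ?U * (\<Prod>y\<in>?U. y)"
    by (simp add: prod.distrib)
  ultimately have "x ^ card ?U = 1" by simp
  moreover have "card (UNIV :: 'a set) = Suc (card ?U)"
    using card_finite_field_ge_2[where 'a='a] by (simp add: card_Diff_singleton)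
  ultimately show ?thesis
    by (metis mult.right_neutral power_Suc)
qed

lemma poly_coeffs_zero_if_vanishes:
  fixes a :: "nat \<Rightarrow> 'a::{finite,field}"
  assumes "n \<le> card (UNIV :: 'a set)" "\<forall>t. (\<Sum>k<n. a k * t ^ k) = 0" "k < n"
  shows "a k = 0"
proof -
  define p where "p = (\<Sum>k<n. monom (a k) k)"
  have coeff_p: "coeff p j = (if j < n then a j else 0)" for j
    by (simp add: p_def coeff_sum)
  have "p = 0"
  proof (rule ccontr)
    assume "p \<noteq> 0"
    then have "card {t. poly p t = 0} \<le> degree p"
      by (rule card_poly_roots_bound)
    moreover have "{t. poly p t = 0} = UNIV"
      using assms(2) by (simp add: p_def poly_sum poly_monom)
    moreover have "degree p < n"
      using assms(3) by (intro le_less_trans[OF degree_le[of "n - 1"]]) (auto simp: coeff_p)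
    ultimately show False using assms(1) by simp
  qed
  then show ?thesis using coeff_p[of k] assms(3) by simp
qed

lemma sum_monomials_by_degree_in_var:
  fixes c :: "'a::comm_semiring_1 mpoly"
  assumes "finite S" "\<forall>\<alpha>\<in>S. \<alpha> n < k"
  shows "(\<Sum>\<alpha>\<in>S. c \<alpha> * (\<Prod>i<Suc n. x i ^ \<alpha> i))
       = (\<Sum>j<k. (\<Sum>\<alpha>\<in>{\<alpha>\<in>S. \<alpha> n = j}. c \<alpha> * (\<Prod>i<n. x i ^ \<alpha> i)) * x n ^ j)"
proof -
  have "(\<Sum>\<alpha>\<in>S. c \<alpha> * (\<Prod>i<Suc n. x i ^ \<alpha> i))
      = (\<Sum>j<k. \<Sum>\<alpha>\<in>{\<alpha>\<in>S. \<alpha> n = j}. c \<alpha> * (\<Prod>i<Suc n. x i ^ \<alpha> i))"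
    by (rule sum.group[symmetric]) (use assms in auto)
  also have "\<dots> = (\<Sum>j<k. (\<Sum>\<alpha>\<in>{\<alpha>\<in>S. \<alpha> n = j}. c \<alpha> * (\<Prod>i<n. x i ^ \<alpha> i)) * x n ^ j)"
    unfolding sum_distrib_right by (intro sum.cong refl) (auto simp: mult.assoc)
  finally show ?thesis .
qed

lemma sum_monomials_drop_var:
  fixes n :: nat
  shows "(\<Sum>\<alpha>\<in>{\<alpha>\<in>S. \<alpha> n = k}. c \<alpha> * (\<Prod>i<n. x i ^ \<alpha> i))
   = (\<Sum>\<gamma>\<in>(\<lambda>\<alpha>. \<alpha>(n := 0)) ` {\<alpha>\<in>S. \<alpha> n = k}. c (\<gamma>(n := k)) * (\<Prod>i<n. x i ^ \<gamma> i))"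
proof -
  have "inj_on (\<lambda>\<alpha>. \<alpha>(n := 0)) {\<alpha>\<in>S. \<alpha> n = k}"
    by (rule inj_onI) (metis (mono_tags, lifting) fun_upd_triv fun_upd_upd mem_Collect_eq)
  then have "(\<Sum>\<gamma>\<in>(\<lambda>\<alpha>. \<alpha>(n := 0)) ` {\<alpha>\<in>S. \<alpha> n = k}. c (\<gamma>(n := k)) * (\<Prod>i<n. x i ^ \<gamma> i))
      = (\<Sum>\<alpha>\<in>{\<alpha>\<in>S. \<alpha> n = k}. c ((\<alpha>(n := 0))(n := k)) * (\<Prod>i<n. x i ^ (\<alpha>(n := 0)) i))"
    by (rule sum.reindex[unfolded comp_def])
  also have "\<dots> = (\<Sum>\<alpha>\<in>{\<alpha>\<in>S. \<alpha> n = k}. c \<alpha> * (\<Prod>i<n. x i ^ \<alpha> i))"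
  proof (intro sum.cong refl)
    fix \<alpha> assume "\<alpha> \<in> {\<alpha>\<in>S. \<alpha> n = k}"
    moreover have "(\<Prod>i<n. x i ^ (\<alpha>(n := 0)) i) = (\<Prod>i<n. x i ^ \<alpha> i)"
      by (rule prod.cong) auto
    ultimately show "c ((\<alpha>(n := 0))(n := k)) * (\<Prod>i<n. x i ^ (\<alpha>(n := 0)) i)
        = c \<alpha> * (\<Prod>i<n. x i ^ \<alpha> i)"
      by auto
  qed
  finally show ?thesis ..
qed

lemma reduced_poly_slices_vanish:
  fixes c :: "'a::{finite,field} mpoly"
  assumes "finite S" "\<forall>\<alpha>\<in>S. \<alpha> n < card (UNIV :: 'a set)"
    and "\<forall>x. (\<Sum>\<alpha>\<in>S. c \<alpha> * (\<Prod>i<Suc n. x i ^ \<alpha> i)) = 0"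
  shows "(\<Sum>\<alpha>\<in>{\<alpha>\<in>S. \<alpha> n = k}. c \<alpha> * (\<Prod>i<n. x i ^ \<alpha> i)) = 0"
proof (cases "k < card (UNIV :: 'a set)")
  case True
  let ?q = "card (UNIV :: 'a set)"
  define A where "A k x = (\<Sum>\<alpha>\<in>{\<alpha>\<in>S. \<alpha> n = k}. c \<alpha> * (\<Prod>i<n. x i ^ \<alpha> i))" for k x
  have A_indep: "A k (x(n := t)) = A k x" for k x t
    unfolding A_def by (intro sum.cong refl arg_cong2[where f = "(*)"] prod.cong) auto
  have "(\<Sum>k<?q. A k x * t ^ k) = 0" for t
  proof -
    have "(\<Sum>k<?q. A k x * t ^ k) = (\<Sum>k<?q. A k (x(n := t)) * (x(n := t)) n ^ k)"
      by (simp add: A_indep)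
    also have "\<dots> = (\<Sum>\<alpha>\<in>S. c \<alpha> * (\<Prod>i<Suc n. (x(n := t)) i ^ \<alpha> i))"
      unfolding A_def by (rule sum_monomials_by_degree_in_var[symmetric]) (use assms(1,2) in auto)
    also have "\<dots> = 0"
      using assms(3) by blast
    finally show ?thesis .
  qed
  then have "A k x = 0"
    using poly_coeffs_zero_if_vanishes[where a = "\<lambda>k. A k x", OF order.refl _ True] by blast
  then show ?thesis
    by (simp add: A_def)
next
  case False
  then have "{\<alpha>\<in>S. \<alpha> n = k} = {}"
    using assms(2) by auto
  then show ?thesis
    by (simp only: sum.empty)
qed

lemma reduced_poly_coeffs_zero_if_vanishes:
  fixes c :: "'a::{finite,field} mpoly"
  assumes "finite S" "\<forall>\<alpha>\<in>S. \<forall>i. \<alpha> i < card (UNIV :: 'a set)" "\<forall>\<alpha>\<in>S. \<forall>i\<ge>n. \<alpha> i = 0"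
    and "\<forall>x. (\<Sum>\<alpha>\<in>S. c \<alpha> * (\<Prod>i<n. x i ^ \<alpha> i)) = 0"
  shows "\<forall>\<alpha>\<in>S. c \<alpha> = 0"
  using assms
proof (induction n arbitrary: S c)
  case (0 S c)
  show ?case
  proof
    fix \<alpha> assume "\<alpha> \<in> S"
    have "\<beta> = (\<lambda>_. 0)" if "\<beta> \<in> S" for \<beta>
      using "0.prems"(3) that by auto
    then have "S = {\<lambda>_. 0}" "\<alpha> = (\<lambda>_. 0)"
      using \<open>\<alpha> \<in> S\<close> by blast+
    then show "c \<alpha> = 0"
      using spec[OF "0.prems"(4), of undefined] by simp
  qed
next
  case (Suc n S c)
  show ?case
  proof
    fix \<alpha> assume \<alpha>: "\<alpha> \<in> S"
    define S' where "S' = (\<lambda>\<beta>. \<beta>(n := 0)) ` {\<beta>\<in>S. \<beta> n = \<alpha> n}"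
    have "\<forall>\<gamma>\<in>S'. c (\<gamma>(n := \<alpha> n)) = 0"
    proof (rule Suc.IH)
      show "finite S'"
        using Suc.prems(1) by (simp add: S'_def)
      show "\<forall>\<beta>\<in>S'. \<forall>i. \<beta> i < card (UNIV :: 'a set)" "\<forall>\<beta>\<in>S'. \<forall>i\<ge>n. \<beta> i = 0"
        using Suc.prems(2,3) card_finite_field_ge_2[where 'a='a] by (auto simp: S'_def)
      show "\<forall>x. (\<Sum>\<gamma>\<in>S'. c (\<gamma>(n := \<alpha> n)) * (\<Prod>i<n. x i ^ \<gamma> i)) = 0"
        using reduced_poly_slices_vanish[OF Suc.prems(1) _ Suc.prems(4)] Suc.prems(2)
        by (simp add: S'_def sum_monomials_drop_var)
    qed
    moreover have "\<alpha>(n := 0) \<in> S'"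
      using \<alpha> by (simp add: S'_def)
    ultimately show "c \<alpha> = 0"
      by (metis fun_upd_triv fun_upd_upd)
  qed
qed

definition reduce_exps :: "nat \<Rightarrow> (nat \<Rightarrow> nat) \<Rightarrow> nat \<Rightarrow> nat" where
  "reduce_exps q \<alpha> = (\<lambda>i. if \<alpha> i = q then 1 else \<alpha> i)"

lemma prod_power_reduce_exps:
  "(\<Prod>i\<in>A. x i ^ reduce_exps (card (UNIV :: 'a set)) \<alpha> i) = (\<Prod>i\<in>A. (x i :: 'a::{finite,field}) ^ \<alpha> i)"
  by (intro prod.cong) (simp_all add: reduce_exps_def finite_field_power_card)

lemma reduce_exps_monoms_cases:
  assumes "\<alpha> \<in> monoms d m" "2 \<le> q" "d \<le> q"
  shows "reduce_exps q \<alpha> = \<alpha> \<or>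
    (\<exists>j. \<alpha> = (\<lambda>i. if i = j then q else 0) \<and> reduce_exps q \<alpha> = (\<lambda>i. if i = j then 1 else 0)
         \<and> reduce_exps q \<alpha> \<notin> monoms d m)"
proof (cases "\<exists>j. \<alpha> j = q")
  case True
  then obtain j where j: "\<alpha> j = q" ..
  then have "d = q"
    using monoms_le[OF assms(1), of j] assms(3) by simp
  have "\<alpha> = (\<lambda>i. if i = j then d else 0)"
    by (rule monoms_pure_power[OF assms(1)]) (use j \<open>d = q\<close> assms(2) in auto)
  with \<open>d = q\<close> have \<alpha>: "\<alpha> = (\<lambda>i. if i = j then q else 0)" by blast
  then have reduced: "reduce_exps q \<alpha> = (\<lambda>i. if i = j then 1 else 0)"
    using assms(2) by (auto simp: reduce_exps_def fun_eq_iff)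
  have "(\<Sum>i\<le>m. reduce_exps q \<alpha> i) \<le> 1"
    by (simp add: reduced)
  then have "reduce_exps q \<alpha> \<notin> monoms d m"
    using \<open>d = q\<close> assms(2) by (auto simp: monoms_def)
  with \<alpha> reduced show ?thesis by blast
qed (auto simp: reduce_exps_def fun_eq_iff)

lemma inj_on_reduce_exps:
  assumes "2 \<le> q" "d \<le> q"
  shows "inj_on (reduce_exps q) (monoms d m)"
proof (rule inj_onI)
  fix \<alpha> \<beta> assume \<alpha>: "\<alpha> \<in> monoms d m" and \<beta>: "\<beta> \<in> monoms d m"
    and eq: "reduce_exps q \<alpha> = reduce_exps q \<beta>"
  note cases = reduce_exps_monoms_cases[OF _ assms]
  show "\<alpha> = \<beta>"
  proof (cases "reduce_exps q \<alpha> \<in> monoms d m")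
    case True
    then show ?thesis using cases[OF \<alpha>] cases[OF \<beta>] eq \<alpha> \<beta> by auto
  next
    case False
    then obtain j j' where "\<alpha> = (\<lambda>i. if i = j then q else 0)" "\<beta> = (\<lambda>i. if i = j' then q else 0)"
        "reduce_exps q \<alpha> = (\<lambda>i. if i = j then 1 else 0)"
        "reduce_exps q \<beta> = (\<lambda>i. if i = j' then 1 else 0)"
      using cases[OF \<alpha>] cases[OF \<beta>] eq \<alpha> \<beta> by auto
    moreover from this have "j = j'"
      using eq by (metis zero_neq_one)
    ultimately show ?thesis by simp
  qed
qed

lemma hom_poly_eq_0_if_vanishes:
  fixes f :: "'a::{finite,field} mpoly"
  assumes "f \<in> hom_polys d m" "d \<le> card (UNIV :: 'a set)" "\<forall>x. heval d m f x = 0"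
  shows "f = 0"
proof
  let ?q = "card (UNIV :: 'a set)"
  let ?M = "monoms d m" and ?\<rho> = "reduce_exps ?q"
  have q: "2 \<le> ?q" by (rule card_finite_field_ge_2)
  have inj: "inj_on ?\<rho> ?M"
    using q assms(2) by (rule inj_on_reduce_exps)
  have expand: "heval d m f x = (\<Sum>\<gamma>\<in>?\<rho> ` ?M. f (inv_into ?M ?\<rho> \<gamma>) * (\<Prod>i<Suc m. x i ^ \<gamma> i))" for x
    unfolding heval_def sum.reindex[OF inj] lessThan_Suc_atMost
    by (intro sum.cong refl) (simp add: inj prod_power_reduce_exps)
  have bounded: "\<forall>\<gamma>\<in>?\<rho> ` ?M. \<forall>i. \<gamma> i < ?q"
  proof (intro ballI allI)
    fix \<gamma> i assume "\<gamma> \<in> ?\<rho> ` ?M"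
    then obtain \<alpha> where "\<alpha> \<in> ?M" "\<gamma> = ?\<rho> \<alpha>" by blast
    then have "\<alpha> i \<le> ?q"
      using monoms_le assms(2) le_trans by blast
    with \<open>\<gamma> = ?\<rho> \<alpha>\<close> q show "\<gamma> i < ?q"
      by (auto simp: reduce_exps_def)
  qed
  have supported: "\<forall>\<gamma>\<in>?\<rho> ` ?M. \<forall>i\<ge>Suc m. \<gamma> i = 0"
    using q by (auto simp: reduce_exps_def monoms_def)
  have vanishes: "\<forall>x. (\<Sum>\<gamma>\<in>?\<rho> ` ?M. f (inv_into ?M ?\<rho> \<gamma>) * (\<Prod>i<Suc m. x i ^ \<gamma> i)) = 0"
    using assms(3) unfolding expand by blast
  have coeff_zero: "f (inv_into ?M ?\<rho> \<gamma>) = 0" if "\<gamma> \<in> ?\<rho> ` ?M" for \<gamma>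
    using reduced_poly_coeffs_zero_if_vanishes[OF _ bounded supported vanishes] finite_monoms that
    by blast
  fix \<alpha>
  show "f \<alpha> = 0 \<alpha>"
  proof (cases "\<alpha> \<in> ?M")
    case True
    then show ?thesis using coeff_zero[of "?\<rho> \<alpha>"] inj by simp
  next
    case False
    then show ?thesis using assms(1) by (simp add: hom_polys_def)
  qed
qed

lemma hom_poly_nonzero_at_point:
  fixes f :: "'a::{finite,field} mpoly"
  assumes "f \<in> hom_polys d m" "f \<noteq> 0" "1 \<le> d" "d \<le> card (UNIV :: 'a set)"
  obtains x where "\<forall>i>m. x i = 0" "\<exists>i\<le>m. x i \<noteq> 0" "heval d m f x \<noteq> 0"
proof -
  obtain x0 where x0: "heval d m f x0 \<noteq> 0"
    using hom_poly_eq_0_if_vanishes[OF assms(1,4)] assms(2) by blast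
  define x where "x = (\<lambda>i. if i \<le> m then x0 i else 0)"
  have fx: "heval d m f x \<noteq> 0"
    using x0 heval_restrict[of d m f x0] by (simp add: x_def)
  have nz: "\<exists>i\<le>m. x i \<noteq> 0"
  proof (rule ccontr)
    assume "\<not> ?thesis"
    then have "x = (\<lambda>_. 0)" by (auto simp: x_def fun_eq_iff)
    then have "heval d m f x = 0" using heval_origin[OF assms(3)] by simp
    with fx show False by contradiction
  qed
  have "\<forall>i>m. x i = 0"
    by (simp add: x_def)
  then show ?thesis
    using nz fx by (rule that)
qed

section \<open>The monomial basis\<close>

lemma sum_fun_apply: "(\<Sum>x\<in>A. g x) a = (\<Sum>x\<in>A. g x a)"
  by (induction A rule: infinite_finite_induct) auto

definition monomial_poly :: "(nat \<Rightarrow> nat) \<Rightarrow> 'a::field mpoly" where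
  "monomial_poly \<alpha> = (\<lambda>\<beta>. if \<beta> = \<alpha> then 1 else 0)"

lemma inj_monomial_poly: "inj (monomial_poly :: _ \<Rightarrow> 'a::field mpoly)"
  by (rule injI) (metis monomial_poly_def zero_neq_one)

lemma monomial_poly_in_hom_polys: "\<alpha> \<in> monoms d m \<Longrightarrow> monomial_poly \<alpha> \<in> hom_polys d m"
  by (auto simp: monomial_poly_def hom_polys_def)

lemma card_monomial_polys:
  "card (monomial_poly ` monoms d m :: 'a::field mpoly set) = (m + d) choose d"
  using card_image[OF inj_on_subset[OF inj_monomial_poly subset_UNIV]] card_monoms by metis

lemma independent_monomial_polys:
  "polys.independent (monomial_poly ` monoms d m :: 'a::field mpoly set)"
proof (rule polys.independent_if_scalars_zero)
  show "finite (monomial_poly ` monoms d m :: 'a mpoly set)"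
    using finite_monoms by simp
next
  fix u :: "'a mpoly \<Rightarrow> 'a" and p :: "'a mpoly"
  assume sum: "(\<Sum>p\<in>monomial_poly ` monoms d m. (\<lambda>\<alpha>. u p * p \<alpha>)) = 0"
    and p: "p \<in> monomial_poly ` monoms d m"
  then obtain \<gamma> where \<gamma>: "\<gamma> \<in> monoms d m" "p = monomial_poly \<gamma>" by blast
  have "(\<Sum>q\<in>monomial_poly ` monoms d m. (\<lambda>\<alpha>. u q * q \<alpha>)) \<gamma>
      = (\<Sum>\<alpha>\<in>monoms d m. u (monomial_poly \<alpha>) * monomial_poly \<alpha> \<gamma>)"
    by (simp add: sum_fun_apply sum.reindex[OF inj_on_subset[OF inj_monomial_poly subset_UNIV]])
  also have "\<dots> = (\<Sum>\<alpha>\<in>monoms d m. if \<alpha> = \<gamma> then u p else 0)"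
    using \<gamma>(2) by (intro sum.cong) (auto simp: monomial_poly_def)
  also have "\<dots> = u p"
    using \<gamma>(1) finite_monoms by simp
  finally show "u p = 0"
    using fun_cong[OF sum, of \<gamma>] by simp
qed

lemma hom_polys_subset_span_monomial_polys:
  "hom_polys d m \<subseteq> polys.span (monomial_poly ` monoms d m :: 'a::field mpoly set)"
proof
  fix f :: "'a mpoly" assume f: "f \<in> hom_polys d m"
  have "f = (\<Sum>\<alpha>\<in>monoms d m. (\<lambda>\<beta>. f \<alpha> * monomial_poly \<alpha> \<beta>))"
  proof
    fix \<beta>
    have "(\<Sum>\<alpha>\<in>monoms d m. (\<lambda>\<beta>. f \<alpha> * monomial_poly \<alpha> \<beta>)) \<beta>
        = (\<Sum>\<alpha>\<in>monoms d m. if \<alpha> = \<beta> then f \<beta> else 0)"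
      unfolding sum_fun_apply by (intro sum.cong) (auto simp: monomial_poly_def)
    also have "\<dots> = f \<beta>"
      using f finite_monoms by (simp add: hom_polys_def)
    finally show "f \<beta> = (\<Sum>\<alpha>\<in>monoms d m. (\<lambda>\<beta>. f \<alpha> * monomial_poly \<alpha> \<beta>)) \<beta>" ..
  qed
  also have "\<dots> \<in> polys.span (monomial_poly ` monoms d m)"
    by (intro polys.span_sum polys.span_scale polys.span_base) auto
  finally show "f \<in> polys.span (monomial_poly ` monoms d m)" .
qed

lemma heval_monomial_poly:
  assumes "\<alpha> \<in> monoms d m"
  shows "heval d m (monomial_poly \<alpha>) x = (\<Prod>i\<le>m. x i ^ \<alpha> i)"
proof -
  have "heval d m (monomial_poly \<alpha>) x
      = (\<Sum>\<beta>\<in>monoms d m. if \<beta> = \<alpha> then (\<Prod>i\<le>m. x i ^ \<alpha> i) else 0)"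
    unfolding heval_def by (intro sum.cong) (auto simp: monomial_poly_def)
  then show ?thesis
    using assms finite_monoms by simp
qed

lemma hom_polys_subset_span_if_card_eq:
  assumes "F \<subseteq> hom_polys d m" "polys.independent F" "card F = (m + d) choose d"
  shows "hom_polys d m \<subseteq> polys.span (F :: 'a::field mpoly set)"
proof -
  have "polys.span (monomial_poly ` monoms d m) \<subseteq> polys.span F"
    using assms hom_polys_subset_span_monomial_polys finite_monoms card_monomial_polys[where 'a='a]
    by (intro polys.span_subset_if_independent_card_ge) auto
  then show ?thesis
    using hom_polys_subset_span_monomial_polys by blast
qed

section \<open>Common zeros and the numbers e_r\<close>

lemma finite_proj_points: "finite (proj_points m :: (nat \<Rightarrow> 'a::{finite,field}) set set)"
proof -
  have "finite {x :: nat \<Rightarrow> 'a. \<forall>i. (i \<in> {..m} \<longrightarrow> x i \<in> UNIV) \<and> (i \<notin> {..m} \<longrightarrow> x i = 0)}"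
    by (rule finite_set_of_finite_funs) simp_all
  then have "finite ((\<lambda>x. {(\<lambda>i. c * x i) | c. c \<noteq> 0}) ` {x :: nat \<Rightarrow> 'a. \<forall>i>m. x i = 0})"
    by (simp add: not_le)
  then show ?thesis
    by (rule rev_finite_subset) (auto simp: proj_points_def)
qed

definition common_zeros :: "nat \<Rightarrow> nat \<Rightarrow> 'a::field mpoly set \<Rightarrow> (nat \<Rightarrow> 'a) set set"
  where "common_zeros d m F = {P \<in> proj_points m. \<forall>f\<in>F. \<forall>x\<in>P. heval d m f x = 0}"

lemma num_zeros_eq_card_common_zeros: "num_zeros d m F = card (common_zeros d m F)"
  by (simp add: num_zeros_def common_zeros_def)

lemma finite_common_zeros:
  "finite (common_zeros d m (F :: 'a::{finite,field} mpoly set))"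
  using finite_proj_points by (rule rev_finite_subset) (auto simp: common_zeros_def)

lemma common_zeros_subset_if_span:
  assumes "G \<subseteq> polys.span F"
  shows "common_zeros d m F \<subseteq> common_zeros d m G"
  using assms heval_span_eq_0 by (fastforce simp: common_zeros_def)

lemma num_zeros_le_card_proj_points:
  "num_zeros d m (F :: 'a::{finite,field} mpoly set)
     \<le> card (proj_points m :: (nat \<Rightarrow> 'a) set set)"
  unfolding num_zeros_def by (rule card_mono[OF finite_proj_points]) blast

definition indep_families :: "nat \<Rightarrow> nat \<Rightarrow> nat \<Rightarrow> 'a::field mpoly set set" where
  "indep_families d m r = {F. F \<subseteq> hom_polys d m \<and> card F = r \<and> polys.independent F}"

lemma e_r_eq_Max:
  "e_r TYPE('a::{finite,field}) r d m = Max (num_zeros d m ` (indep_families d m r :: 'a mpoly set set))"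
  by (simp add: e_r_def indep_families_def setcompr_eq_image)

lemma indep_families_nonempty:
  assumes "r \<le> (m + d) choose d"
  shows "indep_families d m r \<noteq> ({} :: 'a::field mpoly set set)"
proof -
  obtain F :: "'a mpoly set" where F: "F \<subseteq> monomial_poly ` monoms d m" "card F = r"
    using obtain_subset_with_card_n assms card_monomial_polys by metis
  have "monomial_poly ` monoms d m \<subseteq> hom_polys d m"
    using monomial_poly_in_hom_polys by blast
  with F(1) have "F \<subseteq> hom_polys d m" by blast
  then have "F \<in> indep_families d m r"
    using polys.independent_mono[OF independent_monomial_polys F(1)] F(2)
    by (auto simp: indep_families_def)
  then show ?thesis by blast
qed

lemma point_class_in_common_zeros_iff:
  assumes "F \<subseteq> hom_polys d m" "\<forall>i>m. x i = 0" "\<exists>i\<le>m. x i \<noteq> 0"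
  shows "{(\<lambda>i. c * x i) | c. c \<noteq> 0} \<in> common_zeros d m F \<longleftrightarrow> (\<forall>f\<in>F. heval d m f x = 0)"
proof
  assume "{(\<lambda>i. c * x i) | c. c \<noteq> 0} \<in> common_zeros d m F"
  moreover have "x \<in> {(\<lambda>i. c * x i) | c. c \<noteq> 0}"
    by (rule CollectI, rule exI[of _ 1]) simp
  ultimately show "\<forall>f\<in>F. heval d m f x = 0"
    by (auto simp: common_zeros_def)
next
  assume "\<forall>f\<in>F. heval d m f x = 0"
  then have "heval d m f (\<lambda>i. c * x i) = 0" if "f \<in> F" for f c
    using that assms(1) heval_homogeneous by fastforce
  moreover have "{(\<lambda>i. c * x i) | c. c \<noteq> 0} \<in> proj_points m"
    using assms(2,3) by (auto simp: proj_points_def)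
  ultimately show "{(\<lambda>i. c * x i) | c. c \<noteq> 0} \<in> common_zeros d m F"
    by (auto simp: common_zeros_def)
qed

lemma indep_families_eliminate_at_point:
  fixes F :: "'a::field mpoly set"
  assumes F: "F \<in> indep_families d m (Suc r)" and f0: "f0 \<in> F" "heval d m f0 x \<noteq> 0"
  defines "G \<equiv> (\<lambda>f. f - (\<lambda>\<alpha>. heval d m f x / heval d m f0 x * f0 \<alpha>)) ` (F - {f0})"
  shows "G \<in> indep_families d m r" and "common_zeros d m F \<subseteq> common_zeros d m G"
    and "\<forall>g\<in>G. heval d m g x = 0"
proof -
  have hom: "F \<subseteq> hom_polys d m" and indep: "polys.independent F" and card: "card F = Suc r"
    using F by (auto simp: indep_families_def)
  then have "finite F"
    by (simp add: card_ge_0_finite)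
  then have "polys.independent G" "card G = r"
    using polys.independent_subtract_multiples[OF indep _ f0(1), of "\<lambda>f. heval d m f x / heval d m f0 x"]
      card by (simp_all add: G_def)
  moreover have "f - (\<lambda>\<alpha>. c * f0 \<alpha>) \<in> hom_polys d m" if "f \<in> F" for f c
    using that f0(1) hom subspace_hom_polys
    by (intro polys.subspace_diff polys.subspace_scale) auto
  then have "G \<subseteq> hom_polys d m"
    unfolding G_def by blast
  ultimately show "G \<in> indep_families d m r"
    by (simp add: indep_families_def)
  have "f - (\<lambda>\<alpha>. c * f0 \<alpha>) \<in> polys.span F" if "f \<in> F" for f c
    using that f0(1) by (intro polys.span_diff polys.span_scale polys.span_base)
  then have "G \<subseteq> polys.span F"
    unfolding G_def by blast
  then show "common_zeros d m F \<subseteq> common_zeros d m G"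
    by (rule common_zeros_subset_if_span)
  have "heval d m (f - (\<lambda>\<alpha>. heval d m f x / heval d m f0 x * f0 \<alpha>)) x = 0" for f
    using f0(2) by (simp only: heval_diff heval_scale) simp
  then show "\<forall>g\<in>G. heval d m g x = 0"
    unfolding G_def by blast
qed

lemma exists_indep_family_more_zeros:
  fixes F :: "'a::{finite,field} mpoly set"
  assumes F: "F \<in> indep_families d m (Suc r)" and d: "1 \<le> d" "d \<le> card (UNIV :: 'a set)"
  shows "\<exists>G \<in> (indep_families d m r :: 'a mpoly set set). num_zeros d m F < num_zeros d m G"
proof -
  have hom: "F \<subseteq> hom_polys d m" and indep: "polys.independent F" and "card F = Suc r"
    using F by (auto simp: indep_families_def)
  then obtain f0 where f0: "f0 \<in> F" "f0 \<noteq> 0"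
    using polys.dependent_zero by (metis card_eq_0_iff ex_in_conv nat.distinct(1))
  obtain x where x: "\<forall>i>m. x i = 0" "\<exists>i\<le>m. x i \<noteq> 0" and f0x: "heval d m f0 x \<noteq> 0"
    using hom_poly_nonzero_at_point[OF _ f0(2) d] hom f0(1) by blast
  define G where "G = (\<lambda>f. f - (\<lambda>\<alpha>. heval d m f x / heval d m f0 x * f0 \<alpha>)) ` (F - {f0})"
  note G = indep_families_eliminate_at_point[OF F f0(1) f0x, folded G_def]
  define P where "P = {(\<lambda>i. c * x i) | c. c \<noteq> 0}"
  have "P \<in> common_zeros d m G"
    using point_class_in_common_zeros_iff[OF _ x] G(1,3) by (auto simp: P_def indep_families_def)
  moreover have "P \<notin> common_zeros d m F"
    using point_class_in_common_zeros_iff[OF hom x] f0(1) f0x by (auto simp: P_def)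
  ultimately have "common_zeros d m F \<subset> common_zeros d m G"
    using G(2) by blast
  then have "num_zeros d m F < num_zeros d m G"
    by (simp add: num_zeros_eq_card_common_zeros psubset_card_mono finite_common_zeros)
  with G(1) show ?thesis by blast
qed

lemma num_zeros_eq_0_if_card_eq_dim:
  assumes "F \<in> indep_families d m ((m + d) choose d)"
  shows "num_zeros d m (F :: 'a::field mpoly set) = 0"
proof -
  have span: "hom_polys d m \<subseteq> polys.span F"
    using assms hom_polys_subset_span_if_card_eq by (auto simp: indep_families_def)
  have "P \<notin> common_zeros d m F" for P
  proof
    assume P: "P \<in> common_zeros d m F"
    then obtain x where x: "P = {(\<lambda>i. c * x i) | c. c \<noteq> 0}" and "\<exists>k\<le>m. x k \<noteq> 0"
      by (auto simp: common_zeros_def proj_points_def)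
    then obtain k where k: "k \<le> m" "x k \<noteq> 0" by blast
    have "x \<in> P"
      unfolding x by (rule CollectI, rule exI[of _ 1]) simp
    define \<alpha> where "\<alpha> = (\<lambda>i. if i = k then d else 0)"
    have \<alpha>: "\<alpha> \<in> monoms d m"
      using k(1) by (simp add: monoms_def \<alpha>_def)
    then have "heval d m (monomial_poly \<alpha>) x = 0"
      using span monomial_poly_in_hom_polys P \<open>x \<in> P\<close>
      by (intro heval_span_eq_0[of _ F]) (auto simp: common_zeros_def)
    moreover have "heval d m (monomial_poly \<alpha>) x = (\<Prod>i\<le>m. if i = k then x k ^ d else 1)"
      unfolding heval_monomial_poly[OF \<alpha>] by (intro prod.cong) (auto simp: \<alpha>_def)
    then have "heval d m (monomial_poly \<alpha>) x = x k ^ d"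
      using k(1) by simp
    ultimately show False
      using k(2) by simp
  qed
  then have "common_zeros d m F = {}" by blast
  then show ?thesis
    by (simp add: num_zeros_eq_card_common_zeros)
qed

lemma e_r_Suc_less:
  assumes "indep_families d m (Suc r) \<noteq> ({} :: 'a::{finite,field} mpoly set set)"
    and "\<forall>F \<in> indep_families d m (Suc r) :: 'a mpoly set set.
           \<exists>G \<in> indep_families d m r :: 'a mpoly set set. num_zeros d m F < num_zeros d m G"
  shows "e_r TYPE('a) (Suc r) d m < e_r TYPE('a) r d m"
proof -
  have fin: "finite (num_zeros d m ` (A :: 'a mpoly set set))" for A
    by (rule finite_subset[OF _ finite_atMost]) (auto intro: num_zeros_le_card_proj_points)
  have "num_zeros d m F < e_r TYPE('a) r d m"
    if F: "F \<in> indep_families d m (Suc r)" for F :: "'a mpoly set"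
  proof -
    obtain G :: "'a mpoly set"
      where "G \<in> indep_families d m r" "num_zeros d m F < num_zeros d m G"
      using assms(2) F by blast
    then show ?thesis
      unfolding e_r_eq_Max using fin by (meson Max_ge image_eqI less_le_trans)
  qed
  then show ?thesis
    unfolding e_r_eq_Max[of "Suc r"] using assms(1) fin by simp
qed

theorem corollary6p3:
  fixes d m :: nat
  assumes "1 \<le> m" and "1 \<le> d" and "d \<le> card (UNIV :: 'a::{finite,field} set)"
  shows "(\<forall>r. 1 \<le> r \<and> r < ((m + d) choose d) \<longrightarrow>
            e_r TYPE('a) (Suc r) d m < e_r TYPE('a) r d m)
         \<and> e_r TYPE('a) ((m + d) choose d) d m = 0"
proof
  let ?families = "\<lambda>r. indep_families d m r :: 'a mpoly set set"
  show "\<forall>r. 1 \<le> r \<and> r < (m + d) choose d \<longrightarrow> e_r TYPE('a) (Suc r) d m < e_r TYPE('a) r d m"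
  proof (intro allI impI)
    fix r assume "1 \<le> r \<and> r < (m + d) choose d"
    then have "?families (Suc r) \<noteq> {}"
      by (intro indep_families_nonempty) simp
    then show "e_r TYPE('a) (Suc r) d m < e_r TYPE('a) r d m"
      using exists_indep_family_more_zeros assms(2,3) by (intro e_r_Suc_less) auto
  qed
  have "?families ((m + d) choose d) \<noteq> {}"
    by (rule indep_families_nonempty) simp
  then have "num_zeros d m ` ?families ((m + d) choose d) = {0}"
    using num_zeros_eq_0_if_card_eq_dim by auto
  then show "e_r TYPE('a) ((m + d) choose d) d m = 0"
    by (simp add: e_r_eq_Max)
qed

end
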